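(* For $n\ge0$ let $N=2n+1$ and let $\#^{[N]}(t)$ be the number of particles at time $t$ of the ternary coalescent started from $N$ particles of mass $1$. For every $t>0$, as $n\to\infty$, $$\frac{\#^{[N]}(t/N^{3/2})}{\sqrt N}\to\frac1t\quad\text{in probability}.$$
   Context: The ternary coalescent is the continuous-time Markov jump process on finite nonincreasing sequences of positive reals (particle masses) in which each (unordered) triple of distinct particles with masses $a,b,c$ merges into one particle of mass $a+b+c$ at rate $a+b+c+3$. *)

theory Defs
  imports "HOL-Probability.Probability"
begin

text \<open>States of the ternary coalescent: finite nonincreasing lists of particle masses.
  Particles are the positions 0..length x - 1 of the list.\<close>

definition triples :: "real list \<Rightarrow> nat set set" where
  "triples x = {T. T \<subseteq> {..<length x} \<and> card T = 3}"

definition tmass :: "real list \<Rightarrow> nat set \<Rightarrow> real" where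
  "tmass x T = (\<Sum>i\<in>T. x ! i)"

definition trate :: "real list \<Rightarrow> nat set \<Rightarrow> real" where
  "trate x T = tmass x T + 3"

definition total_rate :: "real list \<Rightarrow> real" where
  "total_rate x = (\<Sum>T\<in>triples x. trate x T)"

definition merge :: "real list \<Rightarrow> nat set \<Rightarrow> real list" where
  "merge x T = rev (sort (tmass x T # [x ! i. i \<leftarrow> [0..<length x], i \<notin> T]))"

definition jump :: "real list \<Rightarrow> real list pmf" where
  "jump x = map_pmf (merge x)
     (embed_pmf (\<lambda>T. if T \<in> triples x then trate x T / total_rate x else 0))"

text \<open>Law at time s of the ternary coalescent started from x, built by the
  jump-and-hold construction of the continuous-time Markov jump process: hold an
  Exp(total_rate x) time h; if h > s the state at time s is x, otherwise jump
  according to the jump chain and run for the remaining time s - h.  The first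
  argument is a bound on the number of remaining jumps (each jump lowers the
  number of particles by 2, and with fewer than 3 particles the state is absorbing),
  so starting with fuel = length x the recursion is exact.\<close>
primrec coal_law_fuel :: "nat \<Rightarrow> real list \<Rightarrow> real \<Rightarrow> real list measure" where
  "coal_law_fuel 0 x s = return (count_space UNIV) x"
| "coal_law_fuel (Suc k) x s =
     (if length x < 3 then return (count_space UNIV) x
      else density lborel (exponential_density (total_rate x)) \<bind>
        (\<lambda>h. if s < h then return (count_space UNIV) x
             else measure_pmf (jump x) \<bind> (\<lambda>y. coal_law_fuel k y (s - h))))"

definition coal_law :: "real list \<Rightarrow> real \<Rightarrow> real list measure" where
  "coal_law x s = coal_law_fuel (length x) x s"

definition coal_from_units :: "nat \<Rightarrow> real \<Rightarrow> real list measure" where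
  "coal_from_units N s = coal_law (replicate N 1) s"

end

theory Submission
  imports Defs "HOL-Real_Asymp.Real_Asymp"
begin

text \<open>With L particles of total mass M the total merge rate is
  R(M, L) = (L - 1)(L - 2)(M + L)/2, and every jump lowers L by 2, so the number of particles is
  a pure death chain started at N with total mass M = N throughout.  The time it needs to descend
  from N to m is a sum of independent exponential holding times with rates R(N, K), K = N, N - 2, ..., m,
  and Chernoff bounds on both tails of this sum control the particle count.  For
  m = c N^(1/2) the mean of the sum is about 1/(c N^(3/2)), and the exponential tilt w = N^(7/4),
  which makes both Chernoff exponents of order N^(1/4), shows that at time t/N^(3/2) the count
  is of order N^(1/2)/t with probability tending to one.\<close>

section \<open>The total merge rate\<close>

definition coal_rate :: "real \<Rightarrow> nat \<Rightarrow> real" where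
  "coal_rate M L = (real L - 1) * (real L - 2) * (M + real L) / 2"

lemma real_choose_2: "real (n choose 2) = real n * (real n - 1) / 2"
  by (simp add: binomial_gbinomial gbinomial_pochhammer' pochhammer_Suc_prod numeral_2_eq_2 field_simps)

lemma real_choose_3: "real (n choose 3) = real n * (real n - 1) * (real n - 2) / 6"
  by (simp add: binomial_gbinomial gbinomial_pochhammer' pochhammer_Suc_prod numeral_3_eq_3 field_simps)

lemma finite_triples: "finite (triples x)"
  unfolding triples_def by (rule finite_subset[of _ "Pow {..<length x}"]) auto

lemma card_triples: "card (triples x) = length x choose 3"
  unfolding triples_def using n_subsets[of "{..<length x}" 3] by simp

lemma card_triples_containing:
  assumes i: "i < L"
  shows "card {T. T \<subseteq> {..<L} \<and> card T = 3 \<and> i \<in> T} = (L - 1) choose 2"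
proof -
  let ?B = "{B. B \<subseteq> {..<L} - {i} \<and> card B = 2}"
  have fin: "finite ({..<L} - {i})" by simp
  have "{T. T \<subseteq> {..<L} \<and> card T = 3 \<and> i \<in> T} = insert i ` ?B"
  proof (intro set_eqI iffI)
    fix T assume T: "T \<in> {T. T \<subseteq> {..<L} \<and> card T = 3 \<and> i \<in> T}"
    then have "finite T" using finite_subset[of T "{..<L}"] by auto
    then have "T - {i} \<in> ?B" using T by auto
    moreover have "T = insert i (T - {i})" using T by auto
    ultimately show "T \<in> insert i ` ?B" by blast
  next
    fix T assume "T \<in> insert i ` ?B"
    then obtain B where B: "B \<subseteq> {..<L} - {i}" "card B = 2" "T = insert i B" by auto
    then have "finite B" "i \<notin> B" using finite_subset[OF B(1) fin] by auto
    then show "T \<in> {T. T \<subseteq> {..<L} \<and> card T = 3 \<and> i \<in> T}" using B i by auto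
  qed
  moreover have "inj_on (insert i) ?B"
    unfolding inj_on_def by blast
  ultimately have "card {T. T \<subseteq> {..<L} \<and> card T = 3 \<and> i \<in> T} = card ?B"
    by (simp add: card_image)
  also have "\<dots> = card ({..<L} - {i}) choose 2" by (rule n_subsets[OF fin])
  finally show ?thesis using i by simp
qed

lemma sum_tmass_triples:
  "(\<Sum>T\<in>triples x. tmass x T) = real ((length x - 1) choose 2) * sum_list x"
proof -
  let ?L = "length x"
  have "(\<Sum>T\<in>triples x. tmass x T) = (\<Sum>T\<in>triples x. \<Sum>i<?L. if i \<in> T then x ! i else 0)"
    unfolding tmass_def
  proof (rule sum.cong[OF refl])
    fix T assume "T \<in> triples x"
    then have "{..<?L} \<inter> T = T" by (auto simp: triples_def)
    then show "(\<Sum>i\<in>T. x ! i) = (\<Sum>i<?L. if i \<in> T then x ! i else 0)"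
      using sum.inter_restrict[of "{..<?L}" "\<lambda>i. x ! i" T] by simp
  qed
  also have "\<dots> = (\<Sum>i<?L. \<Sum>T\<in>triples x. if i \<in> T then x ! i else 0)"
    by (rule sum.swap)
  also have "\<dots> = (\<Sum>i<?L. x ! i * real ((?L - 1) choose 2))"
  proof (intro sum.cong refl)
    fix i assume i: "i \<in> {..<?L}"
    have "{T\<in>triples x. i \<in> T} = {T. T \<subseteq> {..<?L} \<and> card T = 3 \<and> i \<in> T}"
      unfolding triples_def by auto
    then show "(\<Sum>T\<in>triples x. if i \<in> T then x ! i else 0) = x ! i * real ((?L - 1) choose 2)"
      using finite_triples[of x] card_triples_containing[of i ?L] i
      by (simp add: sum.inter_filter[symmetric])
  qed
  also have "\<dots> = real ((?L - 1) choose 2) * sum_list x"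
    by (simp add: sum_list_sum_nth sum_distrib_right atLeast0LessThan mult.commute)
  finally show ?thesis .
qed

lemma total_rate_eq: "total_rate x = coal_rate (sum_list x) (length x)"
proof (cases "x = []")
  case False
  then have L: "1 \<le> length x" by (simp add: Suc_le_eq)
  have "total_rate x = (\<Sum>T\<in>triples x. tmass x T) + 3 * real (card (triples x))"
    unfolding total_rate_def trate_def by (simp add: sum.distrib)
  also have "\<dots> = coal_rate (sum_list x) (length x)"
    using L unfolding sum_tmass_triples card_triples real_choose_2 real_choose_3 coal_rate_def
    by (simp add: of_nat_diff field_simps)
  finally show ?thesis .
next
  case True
  then have "triples x = {}" by (auto simp: triples_def)
  then show ?thesis using True by (simp add: total_rate_def coal_rate_def)
qed

lemma coal_rate_nonneg: "0 \<le> M \<Longrightarrow> 2 \<le> K \<Longrightarrow> 0 \<le> coal_rate M K"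
  unfolding coal_rate_def by simp

lemma coal_rate_ge: "0 \<le> M \<Longrightarrow> 3 \<le> K \<Longrightarrow> (real K - 1) * (real K - 3) * M / 2 \<le> coal_rate M K"
  unfolding coal_rate_def by (intro divide_right_mono mult_mono) auto

section \<open>The jump chain\<close>

definition positive_masses :: "real list \<Rightarrow> bool" where
  "positive_masses x \<longleftrightarrow> (\<forall>v\<in>set x. 0 < v)"

lemma tmass_pos: assumes "positive_masses x" "T \<in> triples x" shows "0 < tmass x T"
proof -
  have T: "T \<subseteq> {..<length x}" "card T = 3" using assms(2) by (auto simp: triples_def)
  then have "finite T" "T \<noteq> {}" by (auto intro: finite_subset)
  moreover have "\<And>i. i \<in> T \<Longrightarrow> 0 < x ! i" using T(1) assms(1) by (auto simp: positive_masses_def)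
  ultimately show ?thesis unfolding tmass_def by (intro sum_pos) auto
qed

lemma comprehension_eq_map_filter: "[f i. i \<leftarrow> xs, P i] = map f (filter P xs)"
  by (induction xs) auto

lemma unmerged_particles:
  assumes "T \<subseteq> {..<length x}"
  shows "length [x ! i. i \<leftarrow> [0..<length x], i \<notin> T] = length x - card T"
    and "sum_list [x ! i. i \<leftarrow> [0..<length x], i \<notin> T] = (\<Sum>i\<in>{..<length x} - T. x ! i)"
    and "set [x ! i. i \<leftarrow> [0..<length x], i \<notin> T] = (\<lambda>i. x ! i) ` ({..<length x} - T)"
proof -
  have fin: "finite T" using assms by (rule finite_subset) simp
  have d: "distinct (filter (\<lambda>i. i \<notin> T) [0..<length x])" by simp
  have s: "set (filter (\<lambda>i. i \<notin> T) [0..<length x]) = {..<length x} - T" by auto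
  have "length [x ! i. i \<leftarrow> [0..<length x], i \<notin> T] = card ({..<length x} - T)"
    using distinct_card[OF d] s by (simp add: comprehension_eq_map_filter)
  then show "length [x ! i. i \<leftarrow> [0..<length x], i \<notin> T] = length x - card T"
    using assms fin by (simp add: card_Diff_subset)
  show "sum_list [x ! i. i \<leftarrow> [0..<length x], i \<notin> T] = (\<Sum>i\<in>{..<length x} - T. x ! i)"
    using sum_list_distinct_conv_sum_set[OF d, of "\<lambda>i. x ! i"] s by (simp add: comprehension_eq_map_filter)
  show "set [x ! i. i \<leftarrow> [0..<length x], i \<notin> T] = (\<lambda>i. x ! i) ` ({..<length x} - T)"
    using s by (simp add: comprehension_eq_map_filter)
qed

lemma merge_triple:
  assumes pos: "positive_masses x" and T: "T \<in> triples x"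
  shows "length (merge x T) = length x - 2" "sum_list (merge x T) = sum_list x"
    "positive_masses (merge x T)"
proof -
  have Ts: "T \<subseteq> {..<length x}" "card T = 3" using T by (auto simp: triples_def)
  have "length x \<ge> 3" using card_mono[OF _ Ts(1)] Ts(2) by simp
  then show "length (merge x T) = length x - 2"
    unfolding merge_def using unmerged_particles(1)[OF Ts(1)] Ts(2) by simp
  have "sum_list (merge x T) = tmass x T + (\<Sum>i\<in>{..<length x} - T. x ! i)"
    unfolding merge_def sum_list_rev using unmerged_particles(2)[OF Ts(1)]
    by (simp flip: sum_mset_sum_list)
  also have "\<dots> = (\<Sum>i<length x. x ! i)" unfolding tmass_def
    using sum.subset_diff[of T "{..<length x}" "\<lambda>i. x ! i"] Ts(1) by simp
  finally show "sum_list (merge x T) = sum_list x"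
    by (simp add: sum_list_sum_nth atLeast0LessThan)
  have "set (merge x T) = insert (tmass x T) ((\<lambda>i. x ! i) ` ({..<length x} - T))"
    unfolding merge_def set_rev set_sort using unmerged_particles(3)[OF Ts(1)] by simp
  then show "positive_masses (merge x T)"
    using tmass_pos[OF pos T] pos by (auto simp: positive_masses_def)
qed

lemma sum_list_nonneg_if_positive_masses: "positive_masses x \<Longrightarrow> 0 \<le> sum_list x"
  unfolding positive_masses_def by (intro sum_list_nonneg) auto

lemma total_rate_pos: "positive_masses x \<Longrightarrow> 3 \<le> length x \<Longrightarrow> 0 < total_rate x"
  unfolding total_rate_eq coal_rate_def using sum_list_nonneg_if_positive_masses[of x] by simp

lemma set_pmf_jump:
  assumes pos: "positive_masses x" and L: "3 \<le> length x"
  shows "set_pmf (jump x) \<subseteq> merge x ` triples x"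
proof -
  define f where "f = (\<lambda>T. if T \<in> triples x then trate x T / total_rate x else 0)"
  have tp: "0 < total_rate x" using total_rate_pos[OF pos L] .
  have nn: "0 \<le> f T" for T
    using tmass_pos[OF pos, of T] tp unfolding f_def trate_def
    by (auto intro!: divide_nonneg_pos simp: less_imp_le)
  have "(\<integral>\<^sup>+T. ennreal (f T) \<partial>count_space UNIV) = (\<Sum>T\<in>triples x. ennreal (f T))"
    by (rule nn_integral_count_space') (auto simp: finite_triples f_def)
  also have "\<dots> = ennreal (\<Sum>T\<in>triples x. f T)" using nn by (simp add: sum_ennreal)
  also have "(\<Sum>T\<in>triples x. f T) = 1"
    using tp unfolding f_def total_rate_def by (simp add: sum_divide_distrib[symmetric])
  finally have "set_pmf (embed_pmf f) = {T. f T \<noteq> 0}" using set_embed_pmf[of f] nn by simp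
  then show ?thesis unfolding jump_def f_def by auto
qed

lemma jump_preserves:
  assumes "positive_masses x" "3 \<le> length x" "y \<in> set_pmf (jump x)"
  shows "positive_masses y" "sum_list y = sum_list x" "length y = length x - 2"
  using set_pmf_jump[OF assms(1,2)] assms(3) merge_triple[OF assms(1)] by auto

section \<open>Measurability of the jump-and-hold construction\<close>

lemma measurable_bind_pmf:
  fixes p :: "'a pmf" and G :: "'a \<Rightarrow> real \<Rightarrow> 'b measure"
  assumes G: "\<And>y. G y \<in> borel \<rightarrow>\<^sub>M subprob_algebra N"
  shows "(\<lambda>u. measure_pmf p \<bind> (\<lambda>y. G y u)) \<in> borel \<rightarrow>\<^sub>M subprob_algebra N"
proof -
  txt \<open>The pmf lives on a possibly uncountable type; moving every point outside its countable
    support onto the support changes nothing almost surely and makes the kernel countably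
    valued in its second argument.\<close>
  define pick where "pick y = (if y \<in> set_pmf p then y else (SOME z. z \<in> set_pmf p))" for y
  have pick_in: "pick y \<in> set_pmf p" for y
    unfolding pick_def using set_pmf_not_empty[of p] by (auto intro: someI_ex)
  have Gsp: "G y u \<in> space (subprob_algebra N)" for y u
    using measurable_space[OF G[of y], of u] by simp
  have eq: "measure_pmf p \<bind> (\<lambda>y. G y u) = measure_pmf p \<bind> (\<lambda>y. G (pick y) u)" for u
    by (rule bind_cong_AE[where B=N]) (auto simp: Gsp pick_def intro!: AE_pmfI)
  show ?thesis
  proof (subst measurable_cong[OF eq], rule measurable_bind[where N="measure_pmf p"])
    show "(\<lambda>x. measure_pmf p) \<in> borel \<rightarrow>\<^sub>M subprob_algebra (measure_pmf p)"
      by (rule measurable_const)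
        (auto simp: space_subprob_algebra prob_space_imp_subprob_space measure_pmf.prob_space_axioms)
    show "(\<lambda>x. G (pick (snd x)) (fst x)) \<in> borel \<Otimes>\<^sub>M measure_pmf p \<rightarrow>\<^sub>M subprob_algebra N"
    proof (rule measurable_compose_countable'[where I="set_pmf p" and f="\<lambda>i x. G i (fst x)"])
      show "(\<lambda>x. G i (fst x)) \<in> borel \<Otimes>\<^sub>M measure_pmf p \<rightarrow>\<^sub>M subprob_algebra N" for i
        by (rule measurable_compose[OF measurable_fst]) (simp add: G)
      show "(\<lambda>x. pick (snd x)) \<in> borel \<Otimes>\<^sub>M measure_pmf p \<rightarrow>\<^sub>M count_space (set_pmf p)"
        by (rule measurable_compose[OF measurable_snd]) (simp add: pick_in)
    qed simp
  qed
qed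

lemma return_in_space_subprob_algebra:
  "return (count_space UNIV) x \<in> space (subprob_algebra (count_space UNIV))"
  by (simp add: space_subprob_algebra prob_space_imp_subprob_space prob_space_return)

lemma subprob_space_exponential_density:
  "subprob_space (density lborel (\<lambda>h. ennreal (exponential_density r h)))"
proof (cases "r > 0")
  case True
  then show ?thesis using prob_space_exponential_density prob_space_imp_subprob_space by blast
next
  case False
  then have "(\<lambda>h. ennreal (exponential_density r h)) = (\<lambda>_. 0)"
    by (auto simp: exponential_density_def ennreal_eq_0_iff mult_nonpos_nonneg intro!: ext)
  then show ?thesis by (auto intro!: subprob_spaceI simp: emeasure_density)
qed

lemma hold_or_jump_measurable:
  assumes B: "B \<in> borel \<rightarrow>\<^sub>M subprob_algebra (count_space UNIV)"
  shows "(\<lambda>h. if s < h then return (count_space UNIV) x else B (s - h))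
    \<in> density lborel (\<lambda>h. ennreal (exponential_density r h)) \<rightarrow>\<^sub>M subprob_algebra (count_space UNIV)"
proof -
  have "(\<lambda>h. if s < h then return (count_space UNIV) x else B (s - h))
    \<in> borel \<rightarrow>\<^sub>M subprob_algebra (count_space UNIV)"
  proof (rule measurable_If)
    show "(\<lambda>h. B (s - h)) \<in> borel \<rightarrow>\<^sub>M subprob_algebra (count_space UNIV)"
      by (rule measurable_compose[OF _ B]) measurable
  qed (auto intro: measurable_const return_in_space_subprob_algebra)
  then show ?thesis by (subst measurable_cong_sets) auto
qed

lemma coal_law_fuel_measurable:
  "(\<lambda>s. coal_law_fuel k x s) \<in> borel \<rightarrow>\<^sub>M subprob_algebra (count_space UNIV)"
proof (induction k arbitrary: x)
  case (Suc k)
  define D where "D = density lborel (\<lambda>h. ennreal (exponential_density (total_rate x) h))"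
  define B where "B = (\<lambda>u. measure_pmf (jump x) \<bind> (\<lambda>y. coal_law_fuel k y u))"
  have B: "B \<in> borel \<rightarrow>\<^sub>M subprob_algebra (count_space UNIV)"
    unfolding B_def by (rule measurable_bind_pmf) (rule Suc.IH)
  have "(\<lambda>s. D \<bind> (\<lambda>h. if s < h then return (count_space UNIV) x else B (s - h)))
    \<in> borel \<rightarrow>\<^sub>M subprob_algebra (count_space UNIV)"
  proof (rule measurable_bind[where N=D])
    show "(\<lambda>s. D) \<in> borel \<rightarrow>\<^sub>M subprob_algebra D"
      by (rule measurable_const)
        (auto simp: space_subprob_algebra D_def subprob_space_exponential_density)
    have "(\<lambda>z. if fst z < snd z then return (count_space UNIV) x else B (fst z - snd z))
      \<in> (borel :: real measure) \<Otimes>\<^sub>M (borel :: real measure) \<rightarrow>\<^sub>M subprob_algebra (count_space UNIV)"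
    proof (rule measurable_If)
      show "(\<lambda>z. B (fst z - snd z)) \<in> (borel :: real measure) \<Otimes>\<^sub>M (borel :: real measure)
        \<rightarrow>\<^sub>M subprob_algebra (count_space UNIV)"
        by (rule measurable_compose[OF _ B]) measurable
    qed (auto intro: measurable_const return_in_space_subprob_algebra)
    then show "(\<lambda>z. if fst z < snd z then return (count_space UNIV) x else B (fst z - snd z))
      \<in> borel \<Otimes>\<^sub>M D \<rightarrow>\<^sub>M subprob_algebra (count_space UNIV)"
      by (subst measurable_cong_sets[OF sets_pair_measure_cong[OF refl] refl]) (auto simp: D_def)
  qed
  then show ?case unfolding B_def D_def by (simp add: return_in_space_subprob_algebra)
next
  case 0
  then show ?case by (simp add: return_in_space_subprob_algebra)
qed

lemma coal_law_fuel_in_subprob_algebra: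
  "coal_law_fuel k x s \<in> space (subprob_algebra (count_space UNIV))"
  using measurable_space[OF coal_law_fuel_measurable] by simp

lemma finite_measure_coal_law_fuel: "finite_measure (coal_law_fuel k x s)"
  using coal_law_fuel_in_subprob_algebra[of k x s]
  unfolding space_subprob_algebra subprob_space_def by blast

lemma sets_coal_law_fuel [simp]: "sets (coal_law_fuel k x s) = UNIV"
  using coal_law_fuel_in_subprob_algebra[of k x s] by (simp add: space_subprob_algebra)

lemma emeasure_coal_law_fuel_le_1: "emeasure (coal_law_fuel k x s) A \<le> 1"
  using coal_law_fuel_in_subprob_algebra
  by (auto simp: space_subprob_algebra intro: subprob_space.subprob_emeasure_le_1)

lemma finite_measure_coal_from_units: "finite_measure (coal_from_units N s)"
  unfolding coal_from_units_def coal_law_def by (rule finite_measure_coal_law_fuel)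

lemma sets_coal_from_units [simp]: "sets (coal_from_units N s) = UNIV"
  unfolding coal_from_units_def coal_law_def by simp

section \<open>Chernoff bounds for the particle count\<close>

lemma nn_integral_exponential_density_exp:
  assumes r: "0 < r" and a: "a < r"
  shows "(\<integral>\<^sup>+h. ennreal (exponential_density r h) * ennreal (exp (a * h)) \<partial>lborel)
    = ennreal (r / (r - a))"
proof -
  have ra: "0 < r - a" using a by simp
  have tilt: "ennreal (exponential_density r h) * ennreal (exp (a * h)) =
      ennreal (r / (r - a)) * ennreal (exponential_density (r - a) h)" for h
  proof (cases "h < 0")
    case False
    have "exponential_density r h * exp (a * h) = r / (r - a) * exponential_density (r - a) h"
      using False r a by (simp add: exponential_density_def field_simps flip: exp_add)
    moreover have "0 \<le> r / (r - a)" using r a by simp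
    ultimately show ?thesis using r ra
      by (simp add: exponential_density_nonneg ennreal_mult[symmetric] mult_ac)
  qed (simp add: exponential_density_def)
  have "(\<integral>\<^sup>+h. ennreal (exponential_density (r - a) h) \<partial>lborel) =
      emeasure (density lborel (\<lambda>h. ennreal (exponential_density (r - a) h))) UNIV"
    by (simp add: emeasure_density)
  also have "\<dots> = 1"
    using prob_space.emeasure_space_1[OF prob_space_exponential_density[OF ra]] by simp
  finally show ?thesis unfolding tilt by (subst nn_integral_cmult) auto
qed

lemma emeasure_pmf_bind_le:
  assumes "\<And>y. g y \<in> space (subprob_algebra (count_space UNIV))"
    and "\<And>y. y \<in> set_pmf p \<Longrightarrow> emeasure (g y) A \<le> c"
  shows "emeasure (measure_pmf p \<bind> g) A \<le> c"
proof -
  have "emeasure (measure_pmf p \<bind> g) A = (\<integral>\<^sup>+y. emeasure (g y) A \<partial>measure_pmf p)"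
    by (rule emeasure_bind[where N="count_space UNIV"]) (auto simp: assms(1))
  also have "\<dots> \<le> (\<integral>\<^sup>+y. c \<partial>measure_pmf p)"
    by (rule nn_integral_mono_AE) (auto intro!: AE_pmfI assms(2))
  finally show ?thesis by (simp add: measure_pmf.emeasure_space_1)
qed

lemma emeasure_exponential_bind_le:
  fixes a c r :: real
  assumes r: "0 < r" "a < r" and c: "0 \<le> c"
    and F: "F \<in> density lborel (\<lambda>h. ennreal (exponential_density r h)) \<rightarrow>\<^sub>M subprob_algebra (count_space UNIV)"
    and bound: "\<And>h. emeasure (F h) A \<le> ennreal (c * exp (a * h))"
  shows "emeasure (density lborel (\<lambda>h. ennreal (exponential_density r h)) \<bind> F) A
    \<le> ennreal (c * (r / (r - a)))"
proof -
  let ?D = "density lborel (\<lambda>h. ennreal (exponential_density r h))"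
  have "emeasure (?D \<bind> F) A = (\<integral>\<^sup>+h. emeasure (F h) A \<partial>?D)"
    by (rule emeasure_bind[OF _ F]) auto
  also have "\<dots> \<le> (\<integral>\<^sup>+h. ennreal (c * exp (a * h)) \<partial>?D)"
    by (rule nn_integral_mono) (rule bound)
  also have "\<dots> = (\<integral>\<^sup>+h. ennreal c * (ennreal (exponential_density r h) * ennreal (exp (a * h))) \<partial>lborel)"
    using c by (subst nn_integral_density) (auto intro!: nn_integral_cong simp: ennreal_mult mult_ac)
  also have "\<dots> = ennreal c * ennreal (r / (r - a))"
    using r by (subst nn_integral_cmult) (auto simp: nn_integral_exponential_density_exp)
  also have "\<dots> = ennreal (c * (r / (r - a)))"
    using c r by (intro ennreal_mult[symmetric]) auto
  finally show ?thesis .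
qed

text \<open>Averaging a bound c e^(a h) over the Exp(R) holding time h gives c R/(R - a).\<close>

lemma emeasure_coal_law_fuel_Suc_le:
  fixes a c :: real
  assumes L: "3 \<le> length x" and rate: "0 < total_rate x" "a < total_rate x" and c: "0 \<le> c"
    and hold: "\<And>h. s < h \<Longrightarrow> x \<in> A \<Longrightarrow> 1 \<le> c * exp (a * h)"
    and move: "\<And>y h. y \<in> set_pmf (jump x) \<Longrightarrow> h \<le> s \<Longrightarrow>
      emeasure (coal_law_fuel k y (s - h)) A \<le> ennreal (c * exp (a * h))"
  shows "emeasure (coal_law_fuel (Suc k) x s) A \<le> ennreal (c * (total_rate x / (total_rate x - a)))"
proof -
  define B where "B = (\<lambda>u. measure_pmf (jump x) \<bind> (\<lambda>y. coal_law_fuel k y u))"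
  have "B \<in> borel \<rightarrow>\<^sub>M subprob_algebra (count_space UNIV)"
    unfolding B_def by (rule measurable_bind_pmf) (rule coal_law_fuel_measurable)
  then have F: "(\<lambda>h. if s < h then return (count_space UNIV) x else B (s - h))
    \<in> density lborel (\<lambda>h. ennreal (exponential_density (total_rate x) h))
      \<rightarrow>\<^sub>M subprob_algebra (count_space UNIV)"
    by (rule hold_or_jump_measurable)
  have "emeasure (if s < h then return (count_space UNIV) x else B (s - h)) A
    \<le> ennreal (c * exp (a * h))" for h
  proof (cases "s < h")
    case True
    then show ?thesis
      using hold[of h] by (cases "x \<in> A") (auto simp: emeasure_return ennreal_leI simp del: ennreal_1)
  next
    case False
    then show ?thesis unfolding B_def
      by (auto intro!: emeasure_pmf_bind_le coal_law_fuel_in_subprob_algebra move)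
  qed
  then have "emeasure (density lborel (\<lambda>h. ennreal (exponential_density (total_rate x) h)) \<bind>
      (\<lambda>h. if s < h then return (count_space UNIV) x else B (s - h))) A
    \<le> ennreal (c * (total_rate x / (total_rate x - a)))"
    by (rule emeasure_exponential_bind_le[OF rate c F])
  then show ?thesis using L unfolding B_def by simp
qed

text \<open>For f K = R(M, K)/(R(M, K) \<mp> w) it is
  the moment generating function at \<plusminus>w of the time the particle count needs to fall from L
  below m.\<close>

fun stride_prod :: "(nat \<Rightarrow> real) \<Rightarrow> real \<Rightarrow> nat \<Rightarrow> real" where
  "stride_prod f m 0 = 1"
| "stride_prod f m (Suc 0) = 1"
| "stride_prod f m (Suc (Suc L)) =
    (if real (Suc (Suc L)) < m then 1 else f (Suc (Suc L)) * stride_prod f m L)"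

lemma stride_prod_add_2:
  "stride_prod f m (L + 2) = (if real (L + 2) < m then 1 else f (L + 2) * stride_prod f m L)"
  by (simp add: numeral_2_eq_2 del: of_nat_Suc)

lemma stride_prod_below: "real L < m \<Longrightarrow> stride_prod f m L = 1"
  by (induction L rule: nat_induct2) (simp_all add: stride_prod_add_2)

lemma stride_prod_step:
  assumes "2 \<le> L" "m \<le> real L"
  shows "stride_prod f m L = f L * stride_prod f m (L - 2)"
proof -
  obtain n where "L = n + 2" using assms(1) by (metis le_add_diff_inverse2)
  then show ?thesis using assms(2) by (simp add: stride_prod_add_2)
qed

lemma stride_prod_ge_1:
  assumes "\<And>K. m \<le> real K \<Longrightarrow> 1 \<le> f K"
  shows "1 \<le> stride_prod f m L"
proof (induction L rule: nat_induct2)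
  case (step n)
  then show ?case
    using assms[of "n + 2"] mult_mono[of 1 "f (n + 2)" 1 "stride_prod f m n"]
    by (auto simp: stride_prod_add_2)
qed simp_all

lemma stride_prod_nonneg:
  assumes "\<And>K. m \<le> real K \<Longrightarrow> 0 \<le> f K"
  shows "0 \<le> stride_prod f m L"
  by (induction L rule: nat_induct2) (auto simp: stride_prod_add_2 assms)

lemma stride_prod_telescope:
  assumes m: "2 < m"
    and f_nonneg: "\<And>K. m \<le> real K \<Longrightarrow> 0 \<le> f K"
    and f_le: "\<And>K. m \<le> real K \<Longrightarrow> f K \<le> exp (\<phi> (K - 2) - \<phi> K)"
    and start: "\<And>K. m - 2 \<le> real K \<Longrightarrow> real K < m \<Longrightarrow> \<phi> K \<le> C"
  shows "m - 2 \<le> real L \<Longrightarrow> stride_prod f m L \<le> exp (C - \<phi> L)"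
proof (induction L rule: nat_induct2)
  case (step n)
  show ?case
  proof (cases "real (n + 2) < m")
    case True
    then show ?thesis using start[of "n + 2"] step.prems by (simp add: stride_prod_add_2)
  next
    case False
    then have "stride_prod f m (n + 2) = f (n + 2) * stride_prod f m n"
      by (simp add: stride_prod_add_2)
    also have "\<dots> \<le> exp (\<phi> n - \<phi> (n + 2)) * exp (C - \<phi> n)"
      using False f_le[of "n + 2"] f_nonneg[of "n + 2"] step.IH stride_prod_nonneg[OF f_nonneg]
      by (intro mult_mono) auto
    also have "\<dots> = exp (C - \<phi> (n + 2))" by (simp flip: exp_add)
    finally show ?thesis .
  qed
qed (use m start[of 1] in auto)

lemma emeasure_coal_law_fuel_length_ge_eq_0:
  "positive_masses x \<Longrightarrow> real (length x) < m \<Longrightarrow>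
    emeasure (coal_law_fuel k x s) {y. m \<le> real (length y)} = 0"
proof (induction k arbitrary: x s)
  case (Suc k)
  show ?case
  proof (cases "length x < 3")
    case False
    have "emeasure (coal_law_fuel (Suc k) x s) {y. m \<le> real (length y)}
      \<le> ennreal (0 * (total_rate x / (total_rate x - 0)))"
    proof (rule emeasure_coal_law_fuel_Suc_le)
      fix y h assume y: "y \<in> set_pmf (jump x)"
      have "real (length y) < m" using jump_preserves(3)[OF Suc.prems(1) _ y] Suc.prems(2) False by simp
      then show "emeasure (coal_law_fuel k y (s - h)) {y. m \<le> real (length y)} \<le> ennreal (0 * exp (0 * h))"
        using Suc.IH jump_preserves(1)[OF Suc.prems(1) _ y] False by simp
    qed (use False Suc.prems total_rate_pos[OF Suc.prems(1)] in auto)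
    then show ?thesis by simp
  qed (use Suc.prems in \<open>simp add: emeasure_return\<close>)
qed (simp add: emeasure_return)

lemma upper_tail_bound:
  fixes w m M :: real
  assumes w: "0 < w" and m: "2 < m" and rate: "\<And>K. m \<le> real K \<Longrightarrow> w < coal_rate M K"
  defines "f \<equiv> \<lambda>K. coal_rate M K / (coal_rate M K - w)"
  shows "positive_masses x \<Longrightarrow> sum_list x = M \<Longrightarrow> length x \<le> k \<Longrightarrow>
    emeasure (coal_law_fuel k x s) {y. m \<le> real (length y)}
      \<le> ennreal (exp (- w * s) * stride_prod f m (length x))"
proof (induction k arbitrary: x s)
  case 0
  then show ?case using emeasure_coal_law_fuel_length_ge_eq_0[of x m 0 s] m by simp
next
  case (Suc k)
  let ?A = "{y. m \<le> real (length y)}" and ?L = "length x"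
  show ?case
  proof (cases "real ?L < m")
    case True
    then show ?thesis using emeasure_coal_law_fuel_length_ge_eq_0[OF Suc.prems(1) True, of "Suc k" s] by simp
  next
    case False
    define c where "c = exp (- w * s) * stride_prod f m (?L - 2)"
    have prod_ge_1: "1 \<le> stride_prod f m L" for L
      by (rule stride_prod_ge_1) (use rate w in \<open>auto simp: f_def\<close>)
    have L: "3 \<le> ?L" using False m by linarith
    have rate_x: "total_rate x = coal_rate M ?L" using Suc.prems total_rate_eq by simp
    have "emeasure (coal_law_fuel (Suc k) x s) ?A \<le> ennreal (c * (total_rate x / (total_rate x - w)))"
    proof (rule emeasure_coal_law_fuel_Suc_le[OF L total_rate_pos[OF Suc.prems(1) L]])
      show "w < total_rate x" using rate_x rate False by simp
      show "0 \<le> c" unfolding c_def using prod_ge_1[of "?L - 2"] by simp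
    next
      fix h assume "s < h"
      then have "1 \<le> exp (w * (h - s))" using w by simp
      also have "\<dots> \<le> stride_prod f m (?L - 2) * exp (w * (h - s))"
        using prod_ge_1[of "?L - 2"] by simp
      also have "\<dots> = c * exp (w * h)" unfolding c_def by (simp add: algebra_simps flip: exp_add)
      finally show "1 \<le> c * exp (w * h)" .
    next
      fix y h assume y: "y \<in> set_pmf (jump x)"
      note y_props = jump_preserves[OF Suc.prems(1) L y]
      have "emeasure (coal_law_fuel k y (s - h)) ?A \<le> ennreal (exp (- w * (s - h)) * stride_prod f m (?L - 2))"
        using Suc.IH[OF y_props(1)] y_props Suc.prems by simp
      also have "exp (- w * (s - h)) * stride_prod f m (?L - 2) = c * exp (w * h)"
        unfolding c_def by (simp add: algebra_simps flip: exp_add)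
      finally show "emeasure (coal_law_fuel k y (s - h)) ?A \<le> ennreal (c * exp (w * h))" .
    qed
    also have "c * (total_rate x / (total_rate x - w)) = exp (- w * s) * stride_prod f m ?L"
      unfolding c_def rate_x using stride_prod_step[of ?L m f] L False by (simp add: f_def)
    finally show ?thesis .
  qed
qed

lemma lower_tail_bound:
  fixes w m M :: real
  assumes w: "0 \<le> w" and m: "2 < m"
  defines "f \<equiv> \<lambda>K. coal_rate M K / (coal_rate M K + w)"
  shows "positive_masses x \<Longrightarrow> sum_list x = M \<Longrightarrow> length x \<le> k \<Longrightarrow> 0 \<le> s \<Longrightarrow>
    emeasure (coal_law_fuel k x s) {y. real (length y) < m}
      \<le> ennreal (exp (w * s) * stride_prod f m (length x))"
proof (induction k arbitrary: x s)
  case 0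
  then have "1 \<le> ennreal (exp (w * s) * stride_prod f m (length x))"
    using m w by (simp add: stride_prod_below)
  then show ?case using emeasure_coal_law_fuel_le_1 order_trans by blast
next
  case (Suc k)
  let ?A = "{y. real (length y) < m}" and ?L = "length x"
  show ?case
  proof (cases "real ?L < m")
    case True
    then have "1 \<le> ennreal (exp (w * s) * stride_prod f m ?L)"
      using Suc.prems w by (simp add: stride_prod_below)
    then show ?thesis using emeasure_coal_law_fuel_le_1 order_trans by blast
  next
    case False
    define c where "c = exp (w * s) * stride_prod f m (?L - 2)"
    have L: "3 \<le> ?L" using False m by linarith
    have rate_x: "total_rate x = coal_rate M ?L" using Suc.prems total_rate_eq by simp
    have M: "0 \<le> M" using Suc.prems sum_list_nonneg_if_positive_masses by blast
    have rate_pos: "0 < total_rate x" by (rule total_rate_pos[OF Suc.prems(1) L])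
    have "emeasure (coal_law_fuel (Suc k) x s) ?A \<le> ennreal (c * (total_rate x / (total_rate x - - w)))"
    proof (rule emeasure_coal_law_fuel_Suc_le[OF L rate_pos])
      show "- w < total_rate x" using rate_pos w by simp
      show "0 \<le> c" unfolding c_def f_def
        using stride_prod_nonneg[of m "\<lambda>K. coal_rate M K / (coal_rate M K + w)"] coal_rate_nonneg[OF M] m w
        by simp
    next
      fix y h assume y: "y \<in> set_pmf (jump x)" and h: "h \<le> s"
      note y_props = jump_preserves[OF Suc.prems(1) L y]
      have "emeasure (coal_law_fuel k y (s - h)) ?A \<le> ennreal (exp (w * (s - h)) * stride_prod f m (?L - 2))"
        using Suc.IH[OF y_props(1)] y_props Suc.prems h by simp
      also have "exp (w * (s - h)) * stride_prod f m (?L - 2) = c * exp (- w * h)"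
        unfolding c_def by (simp add: algebra_simps flip: exp_add)
      finally show "emeasure (coal_law_fuel k y (s - h)) ?A \<le> ennreal (c * exp (- w * h))" .
    qed (use False in simp)
    also have "c * (total_rate x / (total_rate x - - w)) = exp (w * s) * stride_prod f m ?L"
      unfolding c_def rate_x using stride_prod_step[of ?L m f] L False by (simp add: f_def)
    finally show ?thesis .
  qed
qed
section \<open>Estimates of the moment generating functions\<close>

lemma upper_factor_le:
  fixes M w d m :: real
  assumes M: "0 < M" and w: "0 < w" and d: "0 < d" and m: "3 < m" and K: "m \<le> real K"
    and tilt: "(1 + d) * w \<le> d * (m - 3)^2 * M / 2"
  shows "w < coal_rate M K"
    and "coal_rate M K / (coal_rate M K - w)
      \<le> exp ((1 + d) * w / M / (real (K - 2) - 1) - (1 + d) * w / M / (real K - 1))"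
proof -
  define R where "R = coal_rate M K"
  define A where "A = (real K - 1) * (real K - 3) * M / 2"
  have K3: "3 \<le> K" and K4: "3 < real K" using K m by linarith+
  have "(m - 3)^2 \<le> (real K - 3)^2" using K m by (intro power_mono) auto
  also have "\<dots> \<le> (real K - 1) * (real K - 3)" using K3 by (simp add: power2_eq_square mult_right_mono)
  finally have "d * (m - 3)^2 * M / 2 \<le> d * A"
    unfolding A_def using d M by (simp add: mult_left_mono mult_right_mono)
  then have dA: "(1 + d) * w \<le> d * A" using tilt by linarith
  then have wA: "w < A" using w d by (simp add: distrib_right) (smt (verit) mult_less_cancel_left_pos)
  have AR: "A \<le> R" unfolding A_def R_def using K3 M by (intro coal_rate_ge) auto
  then show "w < coal_rate M K" using wA unfolding R_def by simp
  have "R / (R - w) = 1 + w / (R - w)" using wA AR by (simp add: field_simps)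
  also have "\<dots> \<le> exp (w / (R - w))" by (rule exp_ge_add_one_self[THEN order.trans[rotated]]) simp
  also have "w / (R - w) \<le> w / (A - w)" using AR wA w by (intro divide_left_mono) auto
  also have "w / (A - w) \<le> (1 + d) * w / A"
  proof -
    have "w * A \<le> (1 + d) * w * (A - w)"
      using mult_left_mono[OF dA, of w] w by (simp add: algebra_simps)
    then show ?thesis using wA w by (simp add: field_simps)
  qed
  also have "(1 + d) * w / A = (1 + d) * w / M / (real (K - 2) - 1) - (1 + d) * w / M / (real K - 1)"
  proof -
    define \<beta> where "\<beta> = (1 + d) * w / M"
    have "\<beta> / (real K - 3) - \<beta> / (real K - 1) = 2 * \<beta> / ((real K - 1) * (real K - 3))"
      using K4 by (simp add: field_simps)
    also have "\<dots> = (1 + d) * w / A" unfolding A_def \<beta>_def by (simp add: mult_ac)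
    finally show ?thesis using K3 by (simp add: \<beta>_def of_nat_diff)
  qed
  finally show "coal_rate M K / (coal_rate M K - w)
      \<le> exp ((1 + d) * w / M / (real (K - 2) - 1) - (1 + d) * w / M / (real K - 1))"
    unfolding R_def by simp
qed

lemma upper_stride_prod_le:
  fixes M w d m :: real
  assumes M: "0 < M" and w: "0 < w" and d: "0 < d" and m: "3 < m"
    and tilt: "(1 + d) * w \<le> d * (m - 3)^2 * M / 2"
  shows "stride_prod (\<lambda>K. coal_rate M K / (coal_rate M K - w)) m L \<le> exp ((1 + d) * w / (M * (m - 3)))"
proof (cases "real L < m")
  case True
  then show ?thesis using M w d m by (simp add: stride_prod_below)
next
  case False
  define \<beta> where "\<beta> = (1 + d) * w / M"
  have \<beta>: "0 \<le> \<beta>" unfolding \<beta>_def using M w d by simp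
  note factor = upper_factor_le[OF M w d m _ tilt, folded \<beta>_def]
  have "stride_prod (\<lambda>K. coal_rate M K / (coal_rate M K - w)) m L \<le> exp (\<beta> / (m - 3) - \<beta> / (real L - 1))"
  proof (rule stride_prod_telescope[where \<phi> = "\<lambda>K. \<beta> / (real K - 1)"])
    show "0 \<le> coal_rate M K / (coal_rate M K - w)" if "m \<le> real K" for K
      using factor(1)[OF that] w by simp
    show "\<beta> / (real K - 1) \<le> \<beta> / (m - 3)" if "m - 2 \<le> real K" "real K < m" for K
      using that m \<beta> by (intro divide_left_mono) auto
  qed (use m False factor(2) in auto)
  also have "\<dots> \<le> exp (\<beta> / (m - 3))" using False m \<beta> by simp
  finally show ?thesis unfolding \<beta>_def by simp
qed

text \<open>Telescoping potential for the lower tail.  The cap B confines the telescoping to K \<le> B + 2,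
  where R(M, K) \<le> K (K + 2) (M + B + 2)/2 loses nothing to leading order as long as B = o(M).\<close>

definition capped_recip :: "nat \<Rightarrow> nat \<Rightarrow> real" where
  "capped_recip B K = 1 / (real (min K B) + 2)"

lemma capped_recip_diff_le:
  assumes "2 \<le> K"
  shows "capped_recip B (K - 2) - capped_recip B K \<le> 2 / (real K * (real K + 2))"
proof (cases "K \<le> B + 1")
  case True
  have "capped_recip B (K - 2) = 1 / real K" unfolding capped_recip_def using True assms by (simp add: of_nat_diff)
  moreover have "1 / (real K + 2) \<le> capped_recip B K" unfolding capped_recip_def by (intro divide_left_mono) auto
  moreover have "1 / real K - 1 / (real K + 2) = 2 / (real K * (real K + 2))" using assms by (simp add: field_simps)
  ultimately show ?thesis by linarith
next
  case False
  then have "capped_recip B (K - 2) = capped_recip B K" unfolding capped_recip_def by simp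
  then show ?thesis using assms by simp
qed

lemma coal_rate_add_le:
  fixes M w m :: real
  assumes M: "0 \<le> M" and w: "0 \<le> w" and m: "0 < m" "m \<le> real K" and K: "2 \<le> K" "K \<le> B + 2"
  shows "coal_rate M K + w \<le> real K * (real K + 2) * (M + real B + 2 + 2 * w / m^2) / 2"
proof -
  have "coal_rate M K \<le> real K * (real K + 2) * (M + real B + 2) / 2"
    unfolding coal_rate_def using K M by (intro divide_right_mono mult_mono) auto
  moreover have "m^2 \<le> real K * (real K + 2)" using m by (simp add: power2_eq_square mult_mono)
  then have "w * m^2 \<le> w * (real K * (real K + 2))" using w by (intro mult_left_mono) auto
  then have "w \<le> real K * (real K + 2) * (w / m^2)" using m by (simp add: field_simps)
  ultimately show ?thesis by (simp add: algebra_simps add_divide_distrib)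
qed

lemma lower_factor_le:
  fixes M w m :: real and B :: nat
  assumes M: "0 \<le> M" and w: "0 < w" and m: "2 < m" and K: "m \<le> real K"
  defines "\<beta> \<equiv> w / (M + real B + 2 + 2 * w / m^2)"
  shows "coal_rate M K / (coal_rate M K + w) \<le> exp (- \<beta> * capped_recip B (K - 2) + \<beta> * capped_recip B K)"
proof -
  define R where "R = coal_rate M K"
  have K3: "3 \<le> K" using K m by linarith
  have R: "0 \<le> R" unfolding R_def using M K3 by (intro coal_rate_nonneg) auto
  have "0 \<le> 2 * w / m^2" using w by simp
  then have \<beta>: "0 < \<beta>" unfolding \<beta>_def using M w of_nat_0_le_iff[of B] by (intro divide_pos_pos) linarith+
  have "R / (R + w) = 1 + - (w / (R + w))" using R w by (simp add: field_simps)
  then have exp_bound: "R / (R + w) \<le> exp (- (w / (R + w)))"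
    using exp_ge_add_one_self[of "- (w / (R + w))"] by simp
  show ?thesis
  proof (cases "K \<le> B + 2")
    case True
    have "R + w \<le> real K * (real K + 2) * (w / \<beta>) / 2"
      unfolding R_def \<beta>_def using coal_rate_add_le[OF M _ _ K _ True] w m K3 by simp
    then have "\<beta> * (R + w) \<le> \<beta> * (real K * (real K + 2) * (w / \<beta>) / 2)"
      using \<beta> by (intro mult_left_mono) auto
    then have "\<beta> * (R + w) \<le> real K * (real K + 2) * w / 2" using \<beta> by simp
    then have "\<beta> * (2 / (real K * (real K + 2))) \<le> w / (R + w)"
      using w R K3 by (simp add: field_simps add_pos_pos)
    moreover have "\<beta> * (capped_recip B (K - 2) - capped_recip B K) \<le> \<beta> * (2 / (real K * (real K + 2)))"
      using capped_recip_diff_le[of K B] K3 \<beta> by (intro mult_left_mono) auto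
    ultimately have "- (w / (R + w)) \<le> - \<beta> * capped_recip B (K - 2) + \<beta> * capped_recip B K"
      by (simp add: algebra_simps)
    then show ?thesis using exp_bound unfolding R_def by (meson exp_le_cancel_iff order_trans)
  next
    case False
    then have "capped_recip B (K - 2) = capped_recip B K" unfolding capped_recip_def by simp
    then show ?thesis using R w unfolding R_def by simp
  qed
qed
lemma lower_stride_prod_le:
  fixes M w m :: real
  assumes M: "0 \<le> M" and w: "0 < w" and m: "2 < m" and B: "B \<le> L"
  defines "\<beta> \<equiv> w / (M + real B + 2 + 2 * w / m^2)"
  shows "stride_prod (\<lambda>K. coal_rate M K / (coal_rate M K + w)) m L \<le> exp (- \<beta> / (m + 2) + \<beta> / (real B + 2))"
proof -
  have \<beta>: "0 \<le> \<beta>" unfolding \<beta>_def using M w by simp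
  show ?thesis
  proof (cases "real L < m")
    case True
    then have "\<beta> / (m + 2) \<le> \<beta> / (real B + 2)" using B \<beta> by (intro divide_left_mono) auto
    then show ?thesis using True by (simp add: stride_prod_below)
  next
    case False
    have "stride_prod (\<lambda>K. coal_rate M K / (coal_rate M K + w)) m L
      \<le> exp (- \<beta> / (m + 2) - (- \<beta> * capped_recip B L))"
    proof (rule stride_prod_telescope[where \<phi> = "\<lambda>K. - \<beta> * capped_recip B K"])
      show "0 \<le> coal_rate M K / (coal_rate M K + w)" if "m \<le> real K" for K
        using coal_rate_nonneg[OF M, of K] that m w by simp
      show "- \<beta> * capped_recip B K \<le> - \<beta> / (m + 2)" if "m - 2 \<le> real K" "real K < m" for K
        using mult_left_mono[of "1 / (m + 2)" "capped_recip B K" \<beta>] that m \<beta>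
        unfolding capped_recip_def by (auto intro: divide_left_mono)
    qed (use m False lower_factor_le[OF M w m] in \<open>auto simp: \<beta>_def\<close>)
    then show ?thesis using B by (simp add: capped_recip_def)
  qed
qed

section \<open>The scaling limit\<close>

lemma replicate_units:
  "positive_masses (replicate N 1)" "sum_list (replicate N (1::real)) = real N"
  by (simp_all add: positive_masses_def sum_list_replicate)

lemma upper_tail_units:
  fixes w d m s :: real
  assumes N: "0 < N" and w: "0 < w" and d: "0 < d" and m: "3 < m"
    and tilt: "(1 + d) * w \<le> d * (m - 3)^2 * real N / 2"
  shows "measure (coal_law (replicate N 1) s) {y. m \<le> real (length y)}
    \<le> exp (- w * s + (1 + d) * w / (real N * (m - 3)))"
proof -
  have N': "0 < real N" using N by simp
  have rate: "w < coal_rate (real N) K" if "m \<le> real K" for K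
    by (rule upper_factor_le(1)[OF N' w d m that tilt])
  have "emeasure (coal_law (replicate N 1) s) {y. m \<le> real (length y)}
    \<le> ennreal (exp (- w * s) *
        stride_prod (\<lambda>K. coal_rate (real N) K / (coal_rate (real N) K - w)) m N)"
    unfolding coal_law_def using upper_tail_bound[OF w _ rate, where x = "replicate N 1" and k = N and s = s] m replicate_units
    by simp
  also have "\<dots> \<le> ennreal (exp (- w * s) * exp ((1 + d) * w / (real N * (m - 3))))"
    by (intro ennreal_leI mult_left_mono upper_stride_prod_le[OF N' w d m tilt]) simp
  finally show ?thesis unfolding measure_def by (intro enn2real_leI) (simp_all flip: exp_add)
qed

lemma lower_tail_units:
  fixes w m s :: real
  assumes w: "0 < w" and m: "2 < m" and s: "0 \<le> s" and B: "B \<le> N"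
  shows "measure (coal_law (replicate N 1) s) {y. real (length y) < m}
    \<le> exp (w * s - w / (real N + real B + 2 + 2 * w / m^2) * (1 / (m + 2) - 1 / (real B + 2)))"
proof -
  have "emeasure (coal_law (replicate N 1) s) {y. real (length y) < m}
    \<le> ennreal (exp (w * s) *
        stride_prod (\<lambda>K. coal_rate (real N) K / (coal_rate (real N) K + w)) m N)"
    unfolding coal_law_def using lower_tail_bound[of w m "replicate N 1"] w m s replicate_units
    by simp
  also have "\<dots> \<le> ennreal (exp (w * s) * exp (- w / (real N + real B + 2 + 2 * w / m^2) / (m + 2)
      + w / (real N + real B + 2 + 2 * w / m^2) / (real B + 2)))"
    using lower_stride_prod_le[of "real N" w m B N] w m B by (intro ennreal_leI mult_left_mono) auto
  finally show ?thesis unfolding measure_def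
    by (intro enn2real_leI) (simp_all add: algebra_simps diff_divide_distrib flip: exp_add)
qed

lemma upper_tail_scaled:
  fixes x t c d k :: real
  assumes N: "real N = x^4" and x: "0 < x" and d: "0 < d"
    and m: "3 < c * x^2" and tilt: "(1 + d) * x^7 \<le> d * (c * x^2 - 3)^2 * x^4 / 2"
    and k: "(1 + d) * x^2 / (c * x^2 - 3) < k"
  shows "measure (coal_law (replicate N 1) (t / x^6)) {y. c * x^2 \<le> real (length y)} \<le> exp (- (t - k) * x)"
proof -
  have "0 < N" using N x by (metis of_nat_0_less_iff zero_less_power)
  then have "measure (coal_law (replicate N 1) (t / x^6)) {y. c * x^2 \<le> real (length y)}
    \<le> exp (- (x^7 * (t / x^6)) + (1 + d) * x^7 / (x^4 * (c * x^2 - 3)))"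
    using upper_tail_units[of N "x^7" d "c * x^2" "t / x^6"] x d m tilt N by simp
  also have "- (x^7 * (t / x^6)) + (1 + d) * x^7 / (x^4 * (c * x^2 - 3)) = x * ((1 + d) * x^2 / (c * x^2 - 3)) - t * x"
    using x m by (simp add: eval_nat_numeral)
  also have "\<dots> \<le> - (t - k) * x" using mult_strict_left_mono[OF k x] by (simp add: algebra_simps)
  finally show ?thesis by simp
qed

lemma lower_tail_scaled:
  fixes x t c k :: real
  assumes N: "real N = x^4" and x: "1 \<le> x" and t: "0 \<le> t" and c: "0 < c"
    and m: "2 < c * x^2" and gap: "c * x^2 + 2 \<le> x^3 - 1"
    and k: "k < x^6 / (x^4 + x^3 + 2 + 2 * x^3 / c^2) * (1 / (c * x^2 + 2) - 1 / (x^3 + 1))"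
  shows "measure (coal_law (replicate N 1) (t / x^6)) {y. real (length y) < c * x^2} \<le> exp (- (k - t) * x)"
proof -
  txt \<open>B = N^(3/4) is o(N), and the lost term 1/B is o(1/m).\<close>
  define B where "B = nat \<lfloor>x^3\<rfloor>"
  define \<beta> where "\<beta> = x^7 / (real N + real B + 2 + 2 * x^7 / (c * x^2)^2)"
  define D where "D = 1 / (c * x^2 + 2) - 1 / (real B + 2)"
  define Qu where "Qu = x^4 + x^3 + 2 + 2 * x^3 / c^2"
  define Du where "Du = 1 / (c * x^2 + 2) - 1 / (x^3 + 1)"
  have B: "real B \<le> x^3" "x^3 - 1 < real B"
    using floor_correct[of "x^3"] x unfolding B_def by auto
  have "x^3 \<le> x^4" using x by (simp add: power_increasing)
  then have BN: "B \<le> N" using B N by linarith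
  have Qu: "0 < Qu" unfolding Qu_def using x c by (intro add_pos_nonneg) auto
  have "2 * x^7 / (c * x^2)^2 = 2 * x^3 / c^2" using x c by (simp add: field_simps)
  moreover have "0 \<le> 2 * x^3 / c^2" using x by simp
  ultimately have "real N + real B + 2 + 2 * x^7 / (c * x^2)^2 \<le> Qu"
    and "0 < real N + real B + 2 + 2 * x^7 / (c * x^2)^2"
    unfolding Qu_def using B N by linarith+
  then have "x^7 / Qu \<le> \<beta>"
    unfolding \<beta>_def using x by (intro divide_left_mono mult_pos_pos) auto
  moreover have "0 \<le> x^7 / Qu" using x Qu by simp
  moreover have "0 < c * x^2 + 2" "0 < x^3 + 1" using c x by (simp_all add: add_pos_nonneg)
  then have "0 \<le> Du" "Du \<le> D" unfolding Du_def D_def using gap B by (auto intro!: divide_left_mono)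
  ultimately have "x^7 / Qu * Du \<le> \<beta> * D" by (intro mult_mono) auto
  moreover have "x * k \<le> x * (x^6 / Qu * Du)"
    using mult_left_mono[OF less_imp_le[OF k], of x] x unfolding Qu_def[symmetric] Du_def[symmetric]
    by simp
  moreover have "x * (x^6 / Qu * Du) = x^7 / Qu * Du" by (simp add: eval_nat_numeral)
  ultimately have kD: "x * k \<le> \<beta> * D" by linarith
  have "measure (coal_law (replicate N 1) (t / x^6)) {y. real (length y) < c * x^2}
    \<le> exp (x^7 * (t / x^6) - \<beta> * D)"
    unfolding \<beta>_def D_def using lower_tail_units[of "x^7" "c * x^2" "t / x^6" B N] x m t BN by simp
  also have "x^7 * (t / x^6) = t * x" using x by (simp add: eval_nat_numeral)
  also have "exp (t * x - \<beta> * D) \<le> exp (- (k - t) * x)"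
    using kD by (simp add: algebra_simps)
  finally show ?thesis .
qed

lemma tendsto_0_if_eventually_le_exp:
  fixes f X :: "nat \<Rightarrow> real"
  assumes X: "filterlim X at_top sequentially" and a: "0 < a"
    and f: "\<And>n. 0 \<le> f n" "\<forall>\<^sub>F n in sequentially. f n \<le> exp (- a * X n)"
  shows "f \<longlonglongrightarrow> 0"
proof -
  have "((\<lambda>x. exp (- a * x)) \<longlongrightarrow> 0) at_top" using a by real_asymp
  then have "(\<lambda>n. exp (- a * X n)) \<longlonglongrightarrow> 0" by (rule filterlim_compose[OF _ X])
  then show ?thesis by (intro tendsto_sandwich[OF _ f(2) tendsto_const]) (simp_all add: f(1))
qed

lemma fourth_root_powers:
  fixes N :: real
  assumes "0 < N"
  shows "(N powr (1/4))^4 = N" "sqrt N = (N powr (1/4))^2" "N powr (3/2) = (N powr (1/4))^6"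
  using assms by (simp_all add: powr_powr powr_half_sqrt flip: powr_realpow)

lemma fourth_root_odd_filterlim: "filterlim (\<lambda>n::nat. real (2 * n + 1) powr (1/4)) at_top sequentially"
  by real_asymp

lemma upper_tail_tendsto_0:
  fixes t c :: real
  assumes t: "0 < t" and c: "1 < c * t"
  shows "(\<lambda>n. measure (coal_from_units (2 * n + 1) (t / real (2 * n + 1) powr (3/2)))
    {y. c * sqrt (real (2 * n + 1)) \<le> real (length y)}) \<longlonglongrightarrow> 0"
proof -
  define d where "d = (c * t - 1) / 2"
  define X where "X n = real (2 * n + 1) powr (1/4)" for n :: nat
  have c0: "0 < c" using t c by (smt (verit) mult_nonpos_nonneg)
  have d: "0 < d" unfolding d_def using c by simp
  have "(1 + d) / c < t" unfolding d_def using c0 c t by (simp add: field_simps)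
  then obtain k where k: "(1 + d) / c < k" "k < t" using dense by blast
  have "((\<lambda>x. (1 + d) * x^2 / (c * x^2 - 3)) \<longlongrightarrow> (1 + d) / c) at_top" using c0 by (real_asymp simp: divide_inverse)
  then have "\<forall>\<^sub>F x in at_top. (1 + d) * x^2 / (c * x^2 - 3) < k" using k(1) by (rule order_tendstoD)
  moreover have "\<forall>\<^sub>F x in at_top. 0 < (x :: real)" by (rule eventually_gt_at_top)
  moreover have "\<forall>\<^sub>F x in at_top. 3 < c * x^2" using c0 by real_asymp
  moreover have "\<forall>\<^sub>F x in at_top. (1 + d) * x^7 \<le> d * (c * x^2 - 3)^2 * x^4 / 2" using c0 d by real_asymp
  ultimately have "\<forall>\<^sub>F x in at_top. 0 < x \<and> 3 < c * x^2
      \<and> (1 + d) * x^7 \<le> d * (c * x^2 - 3)^2 * x^4 / 2 \<and> (1 + d) * x^2 / (c * x^2 - 3) < k"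
    by eventually_elim auto
  from eventually_compose_filterlim[OF this fourth_root_odd_filterlim, folded X_def]
  have "\<forall>\<^sub>F n in sequentially. measure (coal_from_units (2 * n + 1) (t / real (2 * n + 1) powr (3/2)))
      {y. c * sqrt (real (2 * n + 1)) \<le> real (length y)} \<le> exp (- (t - k) * X n)"
  proof eventually_elim
    case (elim n)
    have "0 < real (2 * n + 1)" by simp
    note X = fourth_root_powers[OF this, folded X_def]
    show ?case unfolding coal_from_units_def X(2,3)
      using upper_tail_scaled[OF X(1)[symmetric], of d c k t] elim d by simp
  qed
  then show ?thesis using k
    by (intro tendsto_0_if_eventually_le_exp[OF fourth_root_odd_filterlim, folded X_def, of "t - k"])
      (simp_all add: measure_nonneg)
qed

lemma lower_tail_tendsto_0:
  fixes t c :: real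
  assumes t: "0 < t" and c: "0 < c" "c * t < 1"
  shows "(\<lambda>n. measure (coal_from_units (2 * n + 1) (t / real (2 * n + 1) powr (3/2)))
    {y. real (length y) < c * sqrt (real (2 * n + 1))}) \<longlonglongrightarrow> 0"
proof -
  define X where "X n = real (2 * n + 1) powr (1/4)" for n :: nat
  have "t < 1 / c" using c by (simp add: field_simps)
  then obtain k where k: "t < k" "k < 1 / c" using dense by blast
  have "((\<lambda>x. x^6 / (x^4 + x^3 + 2 + 2 * x^3 / c^2) * (1 / (c * x^2 + 2) - 1 / (x^3 + 1)))
      \<longlongrightarrow> 1 / c) at_top"
    using c by (real_asymp simp: divide_inverse)
  then have "\<forall>\<^sub>F x in at_top. k < x^6 / (x^4 + x^3 + 2 + 2 * x^3 / c^2) * (1 / (c * x^2 + 2) - 1 / (x^3 + 1))"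
    using k(2) by (rule order_tendstoD)
  moreover have "\<forall>\<^sub>F x in at_top. 1 \<le> (x :: real)" by (rule eventually_ge_at_top)
  moreover have "\<forall>\<^sub>F x in at_top. 2 < c * x^2" using c by real_asymp
  moreover have "\<forall>\<^sub>F x in at_top. c * x^2 + 2 \<le> x^3 - 1" using c by real_asymp
  ultimately have "\<forall>\<^sub>F x in at_top. 1 \<le> x \<and> 2 < c * x^2 \<and> c * x^2 + 2 \<le> x^3 - 1
      \<and> k < x^6 / (x^4 + x^3 + 2 + 2 * x^3 / c^2) * (1 / (c * x^2 + 2) - 1 / (x^3 + 1))"
    by eventually_elim auto
  from eventually_compose_filterlim[OF this fourth_root_odd_filterlim, folded X_def]
  have "\<forall>\<^sub>F n in sequentially. measure (coal_from_units (2 * n + 1) (t / real (2 * n + 1) powr (3/2)))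
      {y. real (length y) < c * sqrt (real (2 * n + 1))} \<le> exp (- (k - t) * X n)"
  proof eventually_elim
    case (elim n)
    have "0 < real (2 * n + 1)" by simp
    note X = fourth_root_powers[OF this, folded X_def]
    show ?case unfolding coal_from_units_def X(2,3)
      using lower_tail_scaled[OF X(1)[symmetric], of t c k] elim t c by simp
  qed
  then show ?thesis using k
    by (intro tendsto_0_if_eventually_le_exp[OF fourth_root_odd_filterlim, folded X_def, of "k - t"])
      (simp_all add: measure_nonneg)
qed

lemma measure_deviation_le_tails:
  fixes S t \<epsilon> \<delta> :: real
  assumes M: "finite_measure M" "sets M = UNIV" and S: "0 < S" and \<delta>: "\<delta> \<le> \<epsilon>"
  shows "measure M {x. \<bar>real (length x) / S - 1 / t\<bar> > \<epsilon>}
    \<le> measure M {y. (1 / t + \<epsilon>) * S \<le> real (length y)} + measure M {y. real (length y) < (1 / t - \<delta>) * S}"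
proof -
  interpret finite_measure M by (rule M(1))
  have "{x. \<bar>real (length x) / S - 1 / t\<bar> > \<epsilon>}
    \<subseteq> {y. (1 / t + \<epsilon>) * S \<le> real (length y)} \<union> {y. real (length y) < (1 / t - \<delta>) * S}"
  proof
    fix x assume "x \<in> {x. \<bar>real (length x) / S - 1 / t\<bar> > \<epsilon>}"
    then have "1 / t + \<epsilon> < real (length x) / S \<or> real (length x) / S < 1 / t - \<delta>"
      using \<delta> by auto
    then show "x \<in> {y. (1 / t + \<epsilon>) * S \<le> real (length y)} \<union> {y. real (length y) < (1 / t - \<delta>) * S}"
      using S by (auto simp: pos_less_divide_eq pos_divide_less_eq)
  qed
  then show ?thesis
    by (intro order_trans[OF finite_measure_mono measure_Un_le]) (simp_all add: M(2))
qed

theorem lemma5p2: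
  fixes t :: real
  assumes "t > 0"
  shows "\<forall>\<epsilon>>0. (\<lambda>n::nat. measure
            (coal_from_units (2*n+1) (t / real (2*n+1) powr (3/2)))
            {x. \<bar>real (length x) / sqrt (real (2*n+1)) - 1 / t\<bar> > \<epsilon>})
          \<longlonglongrightarrow> 0"
proof (intro allI impI)
  fix \<epsilon> :: real assume "\<epsilon> > 0"
  define \<delta> where "\<delta> = min \<epsilon> (1 / (2 * t))"
  have \<delta>: "\<delta> \<le> \<epsilon>" "0 < 1 / t - \<delta>" "(1 / t - \<delta>) * t < 1"
    unfolding \<delta>_def using \<open>\<epsilon> > 0\<close> assms by (auto simp: min_def field_simps)
  let ?P = "\<lambda>n. coal_from_units (2 * n + 1) (t / real (2 * n + 1) powr (3/2))"
  have tails: "(\<lambda>n. measure (?P n) {y. (1 / t + \<epsilon>) * sqrt (real (2 * n + 1)) \<le> real (length y)}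
      + measure (?P n) {y. real (length y) < (1 / t - \<delta>) * sqrt (real (2 * n + 1))}) \<longlonglongrightarrow> 0"
    using upper_tail_tendsto_0[OF assms, of "1 / t + \<epsilon>"] lower_tail_tendsto_0[OF assms \<delta>(2,3)]
      \<open>\<epsilon> > 0\<close> assms by (intro tendsto_add_zero) (simp_all add: field_simps)
  have bound: "measure (?P n) {x. \<bar>real (length x) / sqrt (real (2*n+1)) - 1 / t\<bar> > \<epsilon>}
      \<le> measure (?P n) {y. (1 / t + \<epsilon>) * sqrt (real (2 * n + 1)) \<le> real (length y)}
        + measure (?P n) {y. real (length y) < (1 / t - \<delta>) * sqrt (real (2 * n + 1))}" for n
    by (rule measure_deviation_le_tails[OF finite_measure_coal_from_units _ _ \<delta>(1)]) simp_all
  show "(\<lambda>n. measure (?P n) {x. \<bar>real (length x) / sqrt (real (2*n+1)) - 1 / t\<bar> > \<epsilon>}) \<longlonglongrightarrow> 0"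
    by (rule tendsto_sandwich[OF always_eventually always_eventually tendsto_const tails])
      (simp_all only: bound measure_nonneg simp_thms)
qed

end
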